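(* For $n\ge1$, let $P_n$ be the number of pairs $(T,p)$ with $T$ a rooted tree on vertex set $[n]$ and $p$ a prime parking function on $T$, and let $\mathcal{SRP}_n$ be the set of standardized restricted prime parking functions on $n$ vertices. Then \[ P_n=n!\,|\mathcal{SRP}_n|. \]
   Context: A rooted tree on $[n]$ has its edges oriented towards the root; the edge $u\to v$ is written $(u,v)$. For $p\in[n]^n$, drivers $1,\dots,n$ arrive in order; driver $i$ parks at $p_i$ if unoccupied, otherwise follows the directed path towards the root and parks at the first unoccupied vertex, leaving if none exists. $(T,p)$ is a parking function if all drivers park. $T_v$ is the set of vertices with a directed path to $v$ (including $v$); $(T,p)$ is prime if $|T_v|<|\{i:p_i\in T_v\}|$ for every non-root $v$. An edge is crossed/used by a driver if she crosses it after failing to park at her preferred vertex. An ordered (plane) tree is a rooted tree in which the children of each vertex are linearly ordered (left to right). Post-order labeling of an ordered tree with $n$ vertices assigns labels $1,\dots,n$ so that each vertex is labeled after all vertices in the subtrees of its children, and the subtrees of children are labeled from left to right (i.e. the standard post-order traversal). A pair $(\mathcal T,p)$ with $\mathcal T$ an ordered tree with $|\mathcal T|=n$ and $p\in[n]^n$ is a standardized restricted prime parking function if: (1) $(\mathcal T,p)$ is a prime parking function when $\mathcal T$ is regarded as an unordered rooted tree; (2) for any two siblings $u,v$ with parent $w$, $v$ is ordered to the right of $u$ if and only if the edge $(v,w)$ is crossed by some driver before the edge $(u,w)$ is first crossed during the parking procedure; (3) $\mathcal T$ is labeled by post-order. $\mathcal{SRP}_n$ is the set of all such pairs. *)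

theory Defs
  imports Main
begin

text \<open>A rooted tree on vertex set {1..n} is given by its parent function: the edge
  (u, par u) for every non-root u.  The root has parent 0 (0 is not a vertex);
  outside {1..n} the function is 0 (extensionality).\<close>

definition is_rtree :: "nat \<Rightarrow> (nat \<Rightarrow> nat) \<Rightarrow> bool" where
  "is_rtree n par \<longleftrightarrow>
     (\<forall>v. v \<notin> {1..n} \<longrightarrow> par v = 0) \<and>
     (\<forall>v\<in>{1..n}. par v \<le> n) \<and>
     card {v\<in>{1..n}. par v = 0} = 1 \<and>
     (\<forall>v\<in>{1..n}. \<exists>k. (par ^^ k) v = 0)"

definition subtree :: "nat \<Rightarrow> (nat \<Rightarrow> nat) \<Rightarrow> nat \<Rightarrow> nat set" where
  "subtree n par v = {u\<in>{1..n}. \<exists>k. (par ^^ k) u = v}"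

text \<open>Preference lists p: lists of length n, driver i (0-based here) prefers p!i.
  Given the set of occupied vertices, a driver preferring a parks at the first
  unoccupied vertex on the path a, par a, par (par a), ...; the result 0 means
  she reaches beyond the root and leaves.\<close>

definition spot :: "(nat \<Rightarrow> nat) \<Rightarrow> nat set \<Rightarrow> nat \<Rightarrow> nat" where
  "spot par occ a = (par ^^ (LEAST k. (par ^^ k) a \<notin> occ)) a"

definition occ_after :: "(nat \<Rightarrow> nat) \<Rightarrow> nat list \<Rightarrow> nat set" where
  "occ_after par ps =
     fold (\<lambda>a occ. let s = spot par occ a in if s = 0 then occ else insert s occ) ps {}"

definition occ_before :: "(nat \<Rightarrow> nat) \<Rightarrow> nat list \<Rightarrow> nat \<Rightarrow> nat set" where
  "occ_before par p i = occ_after par (take i p)"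

definition is_pref :: "nat \<Rightarrow> nat list \<Rightarrow> bool" where
  "is_pref n p \<longleftrightarrow> length p = n \<and> set p \<subseteq> {1..n}"

definition parking_function :: "nat \<Rightarrow> (nat \<Rightarrow> nat) \<Rightarrow> nat list \<Rightarrow> bool" where
  "parking_function n par p \<longleftrightarrow>
     (\<forall>i<n. spot par (occ_before par p i) (p ! i) \<noteq> 0)"

definition prime_pf :: "nat \<Rightarrow> (nat \<Rightarrow> nat) \<Rightarrow> nat list \<Rightarrow> bool" where
  "prime_pf n par p \<longleftrightarrow> parking_function n par p \<and>
     (\<forall>v\<in>{1..n}. par v \<noteq> 0 \<longrightarrow>
        card (subtree n par v) < card {i. i < n \<and> p ! i \<in> subtree n par v})"

text \<open>Driver i crosses the edge (x,y): y = par x is a vertex, x lies on the path from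
  her preferred vertex, and every vertex of the path from p!i up to x is occupied when
  she arrives (so she fails there and moves on along (x, par x)).\<close>
definition crosses :: "(nat \<Rightarrow> nat) \<Rightarrow> nat list \<Rightarrow> nat \<Rightarrow> nat \<times> nat \<Rightarrow> bool" where
  "crosses par p i e \<longleftrightarrow> (case e of (x, y) \<Rightarrow>
     y = par x \<and> y \<noteq> 0 \<and>
     (\<exists>k. (par ^^ k) (p ! i) = x \<and>
          (\<forall>j\<le>k. (par ^^ j) (p ! i) \<in> occ_before par p i)))"

definition crossed_before :: "nat \<Rightarrow> (nat \<Rightarrow> nat) \<Rightarrow> nat list \<Rightarrow> nat \<times> nat \<Rightarrow> nat \<times> nat \<Rightarrow> bool" where
  "crossed_before n par p e f \<longleftrightarrow>
     (\<exists>i<n. crosses par p i e \<and> (\<forall>j\<le>i. \<not> crosses par p j f))"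

definition P :: "nat \<Rightarrow> nat" where
  "P n = card {(par, p). is_rtree n par \<and> is_pref n p \<and> prime_pf n par p}"

datatype ptree = PNode "ptree list"

fun tsize :: "ptree \<Rightarrow> nat" where
  "tsize (PNode cs) = Suc (sum_list (map tsize cs))"

text \<open>Post-order labels of the roots of a list of sibling subtrees, where the labels
  used so far are 1..off.\<close>
fun clabels :: "nat \<Rightarrow> ptree list \<Rightarrow> nat list" where
  "clabels off [] = []"
| "clabels off (c # cs) = (off + tsize c) # clabels (off + tsize c) cs"

text \<open>Post-order labelling: a subtree whose labelling starts after off gets labels
  off+1 .. off+tsize t, its root getting the last one.  The result lists every vertex
  label together with the left-to-right list of labels of its children.\<close>
fun pnodes :: "nat \<Rightarrow> ptree \<Rightarrow> (nat \<times> nat list) list"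
and pnodes_l :: "nat \<Rightarrow> ptree list \<Rightarrow> (nat \<times> nat list) list" where
  "pnodes off (PNode cs) = pnodes_l off cs @ [(off + tsize (PNode cs), clabels off cs)]"
| "pnodes_l off [] = []"
| "pnodes_l off (c # cs) = pnodes off c @ pnodes_l (off + tsize c) cs"

text \<open>The underlying unordered rooted tree on [tsize t] (post-order labelled), as a
  parent function (root and non-vertices map to 0).\<close>
definition opar :: "ptree \<Rightarrow> nat \<Rightarrow> nat" where
  "opar t v = (if \<exists>w cl. (w, cl) \<in> set (pnodes 0 t) \<and> v \<in> set cl
               then THE w. \<exists>cl. (w, cl) \<in> set (pnodes 0 t) \<and> v \<in> set cl else 0)"

text \<open>Condition (2): for siblings u = cl!i, v = cl!j (children of w, in left-to-right
  order), v is to the right of u iff (v,w) is crossed before (u,w) is first crossed.\<close>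
definition sibling_cond :: "nat \<Rightarrow> ptree \<Rightarrow> nat list \<Rightarrow> bool" where
  "sibling_cond n t p \<longleftrightarrow>
     (\<forall>w cl. (w, cl) \<in> set (pnodes 0 t) \<longrightarrow>
        (\<forall>i j. i < length cl \<longrightarrow> j < length cl \<longrightarrow> i \<noteq> j \<longrightarrow>
           (i < j \<longleftrightarrow> crossed_before n (opar t) p (cl ! j, w) (cl ! i, w))))"

definition SRP :: "nat \<Rightarrow> (ptree \<times> nat list) set" where
  "SRP n = {(t, p). tsize t = n \<and> is_pref n p \<and> prime_pf n (opar t) p \<and> sibling_cond n t p}"

end

theory Submission
  imports Defs "HOL-Combinatorics.Permutations"
begin

text \<open>
  Permutations of [n] act on pairs (T, p) by relabelling vertices, and relabelling commutes
  with the parking procedure, so it preserves primeness and the order in which edges are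
  crossed. In a prime parking function every non-root edge (u, par u) is crossed, since the
  subtree T_u is preferred by more drivers than it has vertices; and no driver crosses two
  sibling edges. Ordering the children of every vertex by decreasing time of first crossing
  and labelling in post-order therefore turns any prime parking function into a standardized
  restricted one, via some permutation. Conversely a post-order labelled plane tree is
  determined by its labelled nodes, so a relabelling between two standardized restricted
  prime parking functions that respects the child orders is the identity. Hence
  ((T, p), \<sigma>) \<mapsto> (\<sigma> T, \<sigma> \<circ> p) is a bijection from SRP_n \<times> S_n onto the prime parking functions.
\<close>

section \<open>Relabelling vertices\<close>

definition relabel :: "(nat \<Rightarrow> nat) \<Rightarrow> (nat \<Rightarrow> nat) \<Rightarrow> nat \<Rightarrow> nat" where
  "relabel s f = s \<circ> f \<circ> inv s"

lemma relabel_apply: "inj s \<Longrightarrow> relabel s f (s x) = s (f x)"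
  by (simp add: relabel_def inv_f_f)

lemma relabel_funpow:
  assumes "bij s"
  shows "relabel s f ^^ k = relabel s (f ^^ k)"
proof (induction k)
  case 0
  show ?case using assms by (simp add: relabel_def fun_eq_iff bij_is_surj surj_f_inv_f)
next
  case (Suc k)
  then show ?case using assms
    by (simp add: relabel_def fun_eq_iff funpow_Suc_right bij_is_inj inv_f_f del: funpow.simps)
qed

lemma relabel_funpow_apply: "bij s \<Longrightarrow> (relabel s f ^^ k) (s x) = s ((f ^^ k) x)"
  by (simp add: relabel_funpow relabel_apply bij_is_inj)

lemma relabel_relabel: "bij s \<Longrightarrow> bij r \<Longrightarrow> relabel r (relabel s f) = relabel (r \<circ> s) f"
  by (simp add: relabel_def o_inv_distrib o_assoc)

lemma relabel_inv_relabel: "bij s \<Longrightarrow> relabel (inv s) (relabel s f) = f"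
  by (simp add: relabel_def fun_eq_iff inv_inv_eq bij_is_inj inv_f_f)

lemma spot_relabel:
  assumes "bij s"
  shows "spot (relabel s par) (s ` occ) (s a) = s (spot par occ a)"
proof -
  have "((relabel s par ^^ k) (s a) \<notin> s ` occ) = ((par ^^ k) a \<notin> occ)" for k
    using assms by (simp add: relabel_funpow_apply inj_image_mem_iff bij_is_inj)
  then show ?thesis unfolding spot_def using assms by (simp add: relabel_funpow_apply)
qed

context
  fixes s :: "nat \<Rightarrow> nat" and n :: nat
  assumes s: "s permutes {1..n}"
begin

lemma perm_fixes_0: "s 0 = 0"
  by (rule permutes_not_in[OF s]) simp

lemma perm_eq_0_iff: "s x = 0 \<longleftrightarrow> x = 0"
  using permutes_inj[OF s] perm_fixes_0 by (metis injD)

lemma perm_pos_iff: "0 < s x \<longleftrightarrow> 0 < x"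
  using perm_eq_0_iff[of x] by linarith

lemma occ_after_relabel: "occ_after (relabel s par) (map s ps) = s ` occ_after par ps"
proof -
  have "fold (\<lambda>a occ. let x = spot (relabel s par) occ a in if x = 0 then occ else insert x occ)
          (map s ps) (s ` Oc)
        = s ` fold (\<lambda>a occ. let x = spot par occ a in if x = 0 then occ else insert x occ) ps Oc"
    for Oc
  proof (induction ps arbitrary: Oc)
    case (Cons a ps)
    then show ?case
      using Cons.IH[of "insert (spot par Oc a) Oc"]
      by (simp add: spot_relabel[OF permutes_bij[OF s]] perm_eq_0_iff Let_def perm_fixes_0)
  qed simp
  from this[of "{}"] show ?thesis unfolding occ_after_def by simp
qed

lemma occ_before_relabel: "occ_before (relabel s par) (map s p) i = s ` occ_before par p i"
  unfolding occ_before_def by (simp add: take_map occ_after_relabel)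

lemma parking_function_relabel:
  "length p = n \<Longrightarrow> parking_function n par p \<Longrightarrow> parking_function n (relabel s par) (map s p)"
  unfolding parking_function_def
  by (simp add: occ_before_relabel spot_relabel[OF permutes_bij[OF s]] perm_eq_0_iff)

lemma subtree_relabel: "subtree n (relabel s par) (s v) = s ` subtree n par v"
proof -
  have "s u \<in> subtree n (relabel s par) (s v) \<longleftrightarrow> s u \<in> s ` subtree n par v" for u
    using permutes_in_image[OF s, of u] permutes_inj[OF s]
    by (auto simp: subtree_def relabel_funpow_apply[OF permutes_bij[OF s]] inj_eq inj_image_mem_iff)
  then show ?thesis by (metis permutes_inverses(1)[OF s] set_eqI)
qed

lemma prime_pf_relabel:
  assumes "length p = n" "prime_pf n par p"
  shows "prime_pf n (relabel s par) (map s p)"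
  unfolding prime_pf_def
proof (intro conjI ballI impI)
  show "parking_function n (relabel s par) (map s p)"
    using assms parking_function_relabel unfolding prime_pf_def by blast
  fix v assume v: "v \<in> {1..n}" "relabel s par v \<noteq> 0"
  obtain v0 where v0: "v = s v0" using permutes_inverses(1)[OF s] by metis
  have "v0 \<in> {1..n}" "par v0 \<noteq> 0"
    using v v0 permutes_in_image[OF s] relabel_apply[OF permutes_inj[OF s]] perm_eq_0_iff
    by auto
  then have "card (subtree n par v0) < card {i. i < n \<and> p ! i \<in> subtree n par v0}"
    using assms unfolding prime_pf_def by blast
  moreover have "card (subtree n (relabel s par) v) = card (subtree n par v0)"
    using v0 subtree_relabel permutes_inj[OF s] by (simp add: card_image inj_on_subset)
  moreover have "{i. i < n \<and> map s p ! i \<in> subtree n (relabel s par) v}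
               = {i. i < n \<and> p ! i \<in> subtree n par v0}"
    using v0 subtree_relabel assms(1) permutes_inj[OF s] by (auto simp: inj_image_mem_iff dest: injD)
  ultimately show "card (subtree n (relabel s par) v)
      < card {i. i < n \<and> map s p ! i \<in> subtree n (relabel s par) v}"
    by simp
qed

lemma crosses_relabel:
  "i < length p \<Longrightarrow> crosses (relabel s par) (map s p) i (s x, s y) = crosses par p i (x, y)"
  using permutes_inj[OF s]
  by (simp add: crosses_def relabel_apply inj_eq perm_eq_0_iff perm_pos_iff occ_before_relabel
      relabel_funpow_apply[OF permutes_bij[OF s]] inj_image_mem_iff)

lemma crossed_before_relabel:
  "length p = n \<Longrightarrow> crossed_before n (relabel s par) (map s p) (s x, s y) (s x', s y')
     = crossed_before n par p (x, y) (x', y')"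
  unfolding crossed_before_def by (auto simp: crosses_relabel)

end

section \<open>Post-order labelled plane trees\<close>

lemma tsize_pos: "0 < tsize t"
  by (cases t) simp

lemma map_fst_pnodes:
  "map fst (pnodes off t) = [Suc off..<Suc (off + tsize t)]"
  "map fst (pnodes_l off cs) = [Suc off..<Suc (off + sum_list (map tsize cs))]"
proof (induction off t and off cs rule: pnodes_pnodes_l.induct)
  case (3 off c cs)
  then show ?case
    using upt_add_eq_append[of "Suc off" "Suc (off + tsize c)" "sum_list (map tsize cs)"]
    by (simp add: add.assoc)
qed simp_all

lemma children_pnodes:
  "distinct (concat (map snd (pnodes off t)))
   \<and> set (concat (map snd (pnodes off t))) = {Suc off..<off + tsize t}"
  "distinct (concat (map snd (pnodes_l off cs)) @ clabels off cs)
   \<and> set (concat (map snd (pnodes_l off cs)) @ clabels off cs)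
       = {Suc off..<Suc (off + sum_list (map tsize cs))}"
proof (induction off t and off cs rule: pnodes_pnodes_l.induct)
  case (3 off c cs)
  define A where "A = concat (map snd (pnodes off c))"
  define B where "B = concat (map snd (pnodes_l (off + tsize c) cs)) @ clabels (off + tsize c) cs"
  have A: "distinct A" "set A = {Suc off..<off + tsize c}"
    using 3(1) A_def by auto
  have B: "distinct B" "set B = {Suc (off + tsize c)..<Suc (off + tsize c + sum_list (map tsize cs))}"
    using 3(2) B_def by auto
  have "set (concat (map snd (pnodes_l off (c # cs))) @ clabels off (c # cs))
        = set A \<union> {off + tsize c} \<union> set B"
    by (auto simp: A_def B_def)
  moreover have "distinct (concat (map snd (pnodes_l off (c # cs))) @ clabels off (c # cs))
                 \<longleftrightarrow> distinct (A @ (off + tsize c) # B)"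
    by (auto simp: A_def B_def)
  ultimately show ?case
    using A B tsize_pos[of c] by (auto simp: add.assoc)
qed simp_all

lemma set_clabels_subset: "set (clabels off cs) \<subseteq> {Suc off..<Suc (off + sum_list (map tsize cs))}"
  using children_pnodes(2)[of off cs] by auto

lemma pnodes_child_less:
  "\<forall>(w, cl)\<in>set (pnodes off t). \<forall>v\<in>set cl. v < w"
  "\<forall>(w, cl)\<in>set (pnodes_l off cs). \<forall>v\<in>set cl. v < w"
proof (induction off t and off cs rule: pnodes_pnodes_l.induct)
  case (1 off cs)
  then show ?case using set_clabels_subset[of off cs] by fastforce
qed auto

lemma distinct_concat_snd_unique:
  "distinct (concat (map snd L)) \<Longrightarrow> (w, cl) \<in> set L \<Longrightarrow> (w', cl') \<in> set L
   \<Longrightarrow> v \<in> set cl \<Longrightarrow> v \<in> set cl' \<Longrightarrow> (w, cl) = (w', cl')"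
proof (induction L)
  case (Cons x L)
  have "v \<in> set (concat (map snd L))" if "(w, cl) \<in> set L \<or> (w', cl') \<in> set L"
    using that Cons.prems(4,5) by force
  then show ?case
    using Cons by (cases "(w, cl) = x"; cases "(w', cl') = x") (auto simp: distinct_append)
qed simp

abbreviation nodes :: "ptree \<Rightarrow> (nat \<times> nat list) set" where
  "nodes t \<equiv> set (pnodes 0 t)"

lemma fst_nodes: "fst ` nodes t = {1..tsize t}"
proof -
  have "fst ` nodes t = set (map fst (pnodes 0 t))" by simp
  also have "\<dots> = {1..tsize t}" unfolding map_fst_pnodes by auto
  finally show ?thesis .
qed

lemma nodes_unique: "(w, cl) \<in> nodes t \<Longrightarrow> (w, cl') \<in> nodes t \<Longrightarrow> cl = cl'"
  by (rule eq_key_imp_eq_value[of "pnodes 0 t"]) (simp_all add: map_fst_pnodes)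

lemma node_in_range: "(w, cl) \<in> nodes t \<Longrightarrow> w \<in> {1..tsize t}"
  using fst_nodes by force

lemma node_exists: "w \<in> {1..tsize t} \<Longrightarrow> \<exists>cl. (w, cl) \<in> nodes t"
  using fst_nodes by force

lemma child_in_range_iff: "(\<exists>w cl. (w, cl) \<in> nodes t \<and> v \<in> set cl) \<longleftrightarrow> v \<in> {1..<tsize t}"
proof -
  have "v \<in> set (concat (map snd (pnodes 0 t))) \<longleftrightarrow> (\<exists>x\<in>nodes t. v \<in> set (snd x))"
    by simp
  also have "\<dots> \<longleftrightarrow> (\<exists>w cl. (w, cl) \<in> nodes t \<and> v \<in> set cl)"
    by (metis prod.collapse snd_conv)
  finally show ?thesis
    using children_pnodes(1)[of 0 t] by (simp only: atLeastLessThan_iff) simp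
qed

lemma node_children_distinct: "(w, cl) \<in> nodes t \<Longrightarrow> distinct cl"
  using conjunct1[OF children_pnodes(1)[of 0 t]] by (auto simp: distinct_concat_iff)

lemma child_less_node: "(w, cl) \<in> nodes t \<Longrightarrow> v \<in> set cl \<Longrightarrow> v < w"
  using pnodes_child_less(1)[of 0 t] by blast

lemma opar_eq: "(w, cl) \<in> nodes t \<Longrightarrow> v \<in> set cl \<Longrightarrow> opar t v = w"
  using distinct_concat_snd_unique[OF conjunct1[OF children_pnodes(1)[of 0 t]]]
  unfolding opar_def by (auto intro!: the_equality)

lemma opar_eq_0: "v \<notin> {1..<tsize t} \<Longrightarrow> opar t v = 0"
  unfolding opar_def using child_in_range_iff by auto

lemma opar_cases: "opar t v = 0 \<or> (\<exists>cl. (opar t v, cl) \<in> nodes t \<and> v \<in> set cl)"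
  using child_in_range_iff[of t v] opar_eq[of _ _ t v] opar_eq_0[of v t] by blast

lemma opar_neq_0:
  assumes "opar t v \<noteq> 0"
  shows "v < opar t v" "opar t v \<le> tsize t"
proof -
  obtain cl where "(opar t v, cl) \<in> nodes t" "v \<in> set cl"
    using opar_cases[of t v] assms by auto
  then show "v < opar t v" "opar t v \<le> tsize t"
    using child_less_node node_in_range by fastforce+
qed

lemma opar_children: "(w, cl) \<in> nodes t \<Longrightarrow> {u. opar t u = w} = set cl"
proof (intro set_eqI iffI)
  fix u assume wcl: "(w, cl) \<in> nodes t" and "u \<in> {u. opar t u = w}"
  then obtain cl' where "(w, cl') \<in> nodes t" "u \<in> set cl'"
    using opar_cases[of t u] node_in_range[OF wcl] by auto
  then show "u \<in> set cl" using nodes_unique wcl by blast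
qed (simp add: opar_eq)

lemma opar_eq_0_iff: "v \<in> {1..tsize t} \<Longrightarrow> opar t v = 0 \<longleftrightarrow> v = tsize t"
proof
  assume "v \<in> {1..tsize t}" "opar t v = 0"
  then show "v = tsize t"
    using child_in_range_iff[of t v] opar_eq[of _ _ t v] node_in_range by fastforce
qed (simp add: opar_eq_0)

lemma funpow_reaches_0_if_increasing:
  fixes f :: "nat \<Rightarrow> nat"
  assumes "\<And>v. f v \<noteq> 0 \<Longrightarrow> v < f v \<and> f v \<le> N"
  shows "\<exists>k. (f ^^ k) v = 0"
proof (induction "N - v" arbitrary: v rule: less_induct)
  case less
  show ?case
  proof (cases "f v = 0")
    case True
    then show ?thesis by (intro exI[of _ 1]) simp
  next
    case False
    then have "N - f v < N - v" using assms[of v] by auto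
    then obtain k where "(f ^^ k) (f v) = 0" using less by blast
    then show ?thesis by (intro exI[of _ "Suc k"]) (simp add: funpow_Suc_right del: funpow.simps)
  qed
qed

lemma is_rtree_opar: "is_rtree (tsize t) (opar t)"
  unfolding is_rtree_def
proof (intro conjI ballI allI impI)
  have "{v \<in> {1..tsize t}. opar t v = 0} = {tsize t}"
    using opar_eq_0_iff tsize_pos[of t] by auto
  then show "card {v \<in> {1..tsize t}. opar t v = 0} = 1" by simp
  show "\<exists>k. (opar t ^^ k) v = 0" for v
    using funpow_reaches_0_if_increasing opar_neq_0 by blast
next
  fix v assume "v \<notin> {1..tsize t}"
  then show "opar t v = 0" by (intro opar_eq_0) auto
next
  fix v show "opar t v \<le> tsize t" using opar_neq_0(2)[of t v] by (cases "opar t v = 0") auto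
qed

section \<open>A plane tree is determined by its labelled nodes\<close>

fun tree_of_nodes :: "(nat \<times> nat list) set \<Rightarrow> nat \<Rightarrow> nat \<Rightarrow> ptree" where
  "tree_of_nodes S 0 w = PNode []"
| "tree_of_nodes S (Suc f) w = PNode (map (tree_of_nodes S f) (THE cl. (w, cl) \<in> S))"

lemma the_single_valued: "single_valued S \<Longrightarrow> (w, cl) \<in> S \<Longrightarrow> (THE cl. (w, cl) \<in> S) = cl"
  unfolding single_valued_def by blast

lemma nodes_single_valued: "single_valued (nodes t)"
  using nodes_unique by (blast intro: single_valuedI)

lemma map_tree_of_nodes_clabels:
  assumes "\<forall>c\<in>set cs. \<forall>off f. set (pnodes off c) \<subseteq> S \<longrightarrow> tsize c \<le> f
             \<longrightarrow> tree_of_nodes S f (off + tsize c) = c"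
  shows "set (pnodes_l off cs) \<subseteq> S \<Longrightarrow> sum_list (map tsize cs) \<le> f
         \<Longrightarrow> map (tree_of_nodes S f) (clabels off cs) = cs"
  using assms
proof (induction cs arbitrary: off)
  case (Cons c cs)
  have "tree_of_nodes S f (off + tsize c) = c" using Cons.prems by auto
  moreover have "map (tree_of_nodes S f) (clabels (off + tsize c) cs) = cs"
    using Cons.prems by (intro Cons.IH) auto
  ultimately show ?case by simp
qed simp

lemma tree_of_nodes_pnodes:
  "single_valued S \<Longrightarrow> set (pnodes off t) \<subseteq> S \<Longrightarrow> tsize t \<le> f
   \<Longrightarrow> tree_of_nodes S f (off + tsize t) = t"
proof (induction t arbitrary: off f)
  case (PNode cs)
  then obtain f' where f: "f = Suc f'" "sum_list (map tsize cs) \<le> f'" by (cases f) auto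
  have "map (tree_of_nodes S f') (clabels off cs) = cs"
    using PNode f(2) by (intro map_tree_of_nodes_clabels) auto
  moreover have "(off + tsize (PNode cs), clabels off cs) \<in> S" using PNode.prems(2) by simp
  ultimately show ?case using f(1) the_single_valued[OF PNode.prems(1)] by simp
qed

lemma tree_of_nodes_transport:
  assumes "single_valued S" "single_valued S'"
    and "\<forall>(w, cl)\<in>S. (\<tau> w, map \<tau> cl) \<in> S'"
    and "\<forall>(w, cl)\<in>S. \<forall>v\<in>set cl. v \<in> fst ` S"
  shows "w \<in> fst ` S \<Longrightarrow> tree_of_nodes S' f (\<tau> w) = tree_of_nodes S f w"
proof (induction f arbitrary: w)
  case (Suc f)
  then obtain c where c: "(w, c) \<in> S" by force
  then have "(\<tau> w, map \<tau> c) \<in> S'" using assms(3) by blast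
  moreover have "map (tree_of_nodes S' f) (map \<tau> c) = map (tree_of_nodes S f) c"
    using Suc.IH assms(4) c by auto
  ultimately show ?case using the_single_valued[OF assms(1) c] the_single_valued[OF assms(2)] by simp
qed simp

lemma tree_eq_if_nodes_map:
  assumes "tsize t = N" "tsize t' = N" "\<tau> N = N"
    and "\<forall>(w, cl)\<in>nodes t. (\<tau> w, map \<tau> cl) \<in> nodes t'"
  shows "t = t'"
proof -
  have "\<forall>(w, cl)\<in>nodes t. \<forall>v\<in>set cl. v \<in> fst ` nodes t"
  proof (intro ballI, clarify)
    fix w cl v assume "(w, cl) \<in> nodes t" "v \<in> set cl"
    then have "v \<in> {1..<tsize t}" using child_in_range_iff by blast
    then show "v \<in> fst ` nodes t" using fst_nodes[of t] by auto
  qed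
  moreover have "N \<in> fst ` nodes t" using fst_nodes[of t] assms(1) tsize_pos[of t] by auto
  ultimately have "tree_of_nodes (nodes t') N (\<tau> N) = tree_of_nodes (nodes t) N N"
    using tree_of_nodes_transport[OF nodes_single_valued nodes_single_valued assms(4)] by blast
  moreover have "tree_of_nodes (nodes t) N N = t"
    using tree_of_nodes_pnodes[OF nodes_single_valued[of t], of 0 t N] assms(1) by simp
  moreover have "tree_of_nodes (nodes t') N N = t'"
    using tree_of_nodes_pnodes[OF nodes_single_valued[of t'], of 0 t' N] assms(2) by simp
  ultimately show ?thesis using assms(3) by simp
qed

lemma relabel_opar_root:
  assumes "\<tau> permutes {1..N}" "tsize t = N" "tsize t' = N" "relabel \<tau> (opar t) = opar t'"
  shows "\<tau> N = N"
proof -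
  have "opar t' (\<tau> N) = 0"
    using relabel_apply[OF permutes_inj[OF assms(1)], of "opar t" N] assms(2,4)
      opar_eq_0[of N t] perm_fixes_0[OF assms(1)] by simp
  moreover have "\<tau> N \<in> {1..N}" using permutes_in_image[OF assms(1)] tsize_pos[of t] assms(2) by simp
  ultimately show ?thesis using opar_eq_0_iff[of "\<tau> N" t'] assms(3) by simp
qed

lemma nodes_automorphism_eq_id:
  assumes \<tau>: "\<tau> permutes {1..tsize t}" and "\<tau> (tsize t) = tsize t"
    and nodes: "\<forall>(w, cl)\<in>nodes t. (\<tau> w, map \<tau> cl) \<in> nodes t"
  shows "\<tau> = id"
proof -
  have fixed: "\<forall>v\<in>{1..tsize t}. (opar t ^^ k) v = 0 \<longrightarrow> \<tau> v = v" for k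
  proof (induction k)
    case (Suc k)
    show ?case
    proof (intro ballI impI)
      fix v assume v: "v \<in> {1..tsize t}" "(opar t ^^ Suc k) v = 0"
      show "\<tau> v = v"
      proof (cases "opar t v = 0")
        case True
        then show ?thesis using opar_eq_0_iff[OF v(1)] assms(2) by simp
      next
        case False
        let ?w = "opar t v"
        obtain c where c: "(?w, c) \<in> nodes t" "v \<in> set c" using opar_cases[of t v] False by auto
        have "(opar t ^^ k) ?w = 0" using v(2) by (simp add: funpow_Suc_right del: funpow.simps)
        then have "\<tau> ?w = ?w" using Suc.IH node_in_range[OF c(1)] by blast
        moreover have "(\<tau> ?w, map \<tau> c) \<in> nodes t" using nodes c(1) by blast
        ultimately have "(?w, map \<tau> c) \<in> nodes t" by simp
        then have "map \<tau> c = c" by (rule nodes_unique[OF _ c(1)])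
        then have "map \<tau> c = map id c" by simp
        then show ?thesis using c(2) unfolding map_eq_conv by simp
      qed
    qed
  qed simp
  have "\<tau> v = v" for v
  proof (cases "v \<in> {1..tsize t}")
    case True
    then obtain k where "(opar t ^^ k) v = 0"
      using is_rtree_opar[of t] unfolding is_rtree_def by blast
    then show ?thesis using \<open>v \<in> {1..tsize t}\<close> fixed by blast
  qed (rule permutes_not_in[OF \<tau>])
  then show ?thesis by (simp add: fun_eq_iff)
qed

section \<open>Rooted trees given by parent functions\<close>

lemma funpow_fixed_point: "f x = x \<Longrightarrow> (f ^^ k) x = x"
  by (induction k) auto

context
  fixes n :: nat and par :: "nat \<Rightarrow> nat"
  assumes rt: "is_rtree n par"
begin

lemma rtree_par_outside: "v \<notin> {1..n} \<Longrightarrow> par v = 0"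
  using rt unfolding is_rtree_def by blast

lemma rtree_par_le: "par v \<le> n"
  using rt unfolding is_rtree_def by (cases "v \<in> {1..n}") auto

lemma rtree_funpow_le: "v \<le> n \<Longrightarrow> (par ^^ k) v \<le> n"
  by (cases k) (auto simp: rtree_par_le)

lemma rtree_funpow_0: "(par ^^ k) 0 = 0"
  by (rule funpow_fixed_point) (simp add: rtree_par_outside)

lemma rtree_reaches_0: "\<exists>k. (par ^^ k) v = 0"
proof (cases "v \<in> {1..n}")
  case True
  then show ?thesis using rt unfolding is_rtree_def by blast
next
  case False
  then show ?thesis using rtree_par_outside by (intro exI[of _ 1]) simp
qed

lemma rtree_funpow_eq_0_mono: "(par ^^ k) v = 0 \<Longrightarrow> k \<le> m \<Longrightarrow> (par ^^ m) v = 0"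
  by (metis funpow_add le_add_diff_inverse2 o_apply rtree_funpow_0)

lemma rtree_no_cycle: "v \<noteq> 0 \<Longrightarrow> 0 < m \<Longrightarrow> (par ^^ m) v \<noteq> v"
proof
  assume "v \<noteq> 0" "0 < m" and cycle: "(par ^^ m) v = v"
  have "(par ^^ (j * m)) v = v" for j
  proof (induction j)
    case (Suc j)
    have "(par ^^ (Suc j * m)) v = (par ^^ m) ((par ^^ (j * m)) v)" by (simp add: funpow_add)
    then show ?case using cycle Suc by simp
  qed simp
  moreover obtain k where "(par ^^ k) v = 0" using rtree_reaches_0 by blast
  then have "(par ^^ (k * m)) v = 0"
    using rtree_funpow_eq_0_mono[of k v "k * m"] \<open>0 < m\<close> by simp
  ultimately show False using \<open>v \<noteq> 0\<close> by simp
qed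

lemma rtree_path_sibling_unique:
  assumes "par u = w" "par v = w" "w \<noteq> 0" "(par ^^ k) a = u" "(par ^^ m) a = v"
  shows "u = v"
proof -
  have sibling_eq: "u = v"
    if "k < m" "par u = w" "par v = w" "(par ^^ k) a = u" "(par ^^ m) a = v" for u v k m
  proof -
    obtain d where m: "m = Suc d + k" using \<open>k < m\<close> by (metis add_Suc less_iff_Suc_add add.commute)
    have "v = (par ^^ Suc d) ((par ^^ k) a)" using that(5) unfolding m funpow_add by simp
    also have "\<dots> = (par ^^ d) w" using that(2,4) by (simp only: funpow_Suc_right o_apply)
    finally have "(par ^^ Suc d) w = w" using that(3) by simp
    then show ?thesis using assms(3) rtree_no_cycle[of w "Suc d"] by simp
  qed
  show ?thesis
  proof (cases k m rule: linorder_cases)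
    case less
    then show ?thesis using sibling_eq assms by blast
  next
    case equal
    then show ?thesis using assms by simp
  next
    case greater
    then show ?thesis using sibling_eq[of m k v u] assms by simp
  qed
qed

lemma rtree_root: "\<exists>r\<in>{1..n}. par r = 0 \<and> (\<forall>x\<in>{1..n}. par x = 0 \<longrightarrow> x = r)"
proof -
  have "card {v\<in>{1..n}. par v = 0} = 1" using rt unfolding is_rtree_def by blast
  then obtain r where "{v\<in>{1..n}. par v = 0} = {r}" by (meson card_1_singletonE)
  then show ?thesis by blast
qed

lemma rtree_reaches_root:
  assumes r: "r \<in> {1..n}" "par r = 0" and u: "u \<in> {1..n}"
  shows "\<exists>k. (par ^^ k) u = r"
proof -
  define m where "m = (LEAST m. (par ^^ m) u = 0)"
  have m: "(par ^^ m) u = 0" unfolding m_def by (rule LeastI_ex) (rule rtree_reaches_0)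
  then obtain j where j: "m = Suc j" using u by (cases m) auto
  have "(par ^^ j) u \<noteq> 0" using not_less_Least[of j "\<lambda>m. (par ^^ m) u = 0"] j m_def by auto
  moreover have "(par ^^ j) u \<le> n" using rtree_funpow_le u by simp
  moreover have "par ((par ^^ j) u) = 0" using m j by simp
  ultimately have "(par ^^ j) u = r" using rtree_root r by (metis atLeastAtMost_iff less_one not_le)
  then show ?thesis by blast
qed

lemma rtree_depth_bound: "\<exists>f. \<forall>u\<in>{1..n}. \<forall>k. (par ^^ k) u \<noteq> 0 \<longrightarrow> k \<le> f"
proof -
  define M where "M u = (SOME m. (par ^^ m) u = 0)" for u
  have M: "(par ^^ M u) u = 0" for u unfolding M_def by (rule someI_ex) (rule rtree_reaches_0)
  have "k < M u" if "(par ^^ k) u \<noteq> 0" for u k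
    using that rtree_funpow_eq_0_mono[OF M, of u k] by (meson not_less)
  moreover have "M u \<le> (\<Sum>x\<in>{1..n}. M x)" if "u \<in> {1..n}" for u
    by (rule member_le_sum) (use that in auto)
  ultimately show ?thesis by (meson less_imp_le_nat order_trans)
qed

end

section \<open>The plane tree of a rooted tree with ordered children\<close>

fun ptree_of :: "(nat \<Rightarrow> nat list) \<Rightarrow> nat \<Rightarrow> nat \<Rightarrow> ptree" where
  "ptree_of ch 0 v = PNode []"
| "ptree_of ch (Suc f) v = PNode (map (ptree_of ch f) (ch v))"

fun postorder :: "(nat \<Rightarrow> nat list) \<Rightarrow> nat \<Rightarrow> nat \<Rightarrow> nat list" where
  "postorder ch 0 v = [v]"
| "postorder ch (Suc f) v = concat (map (postorder ch f) (ch v)) @ [v]"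

fun height_le :: "(nat \<Rightarrow> nat list) \<Rightarrow> nat \<Rightarrow> nat \<Rightarrow> bool" where
  "height_le ch 0 v \<longleftrightarrow> ch v = []"
| "height_le ch (Suc f) v \<longleftrightarrow> (\<forall>c\<in>set (ch v). height_le ch f c)"

lemma tsize_ptree_of: "tsize (ptree_of ch f v) = length (postorder ch f v)"
proof (induction f arbitrary: v)
  case (Suc f)
  then have "tsize \<circ> ptree_of ch f = length \<circ> postorder ch f" by (simp add: fun_eq_iff)
  then show ?case by (simp add: length_concat)
qed simp

lemma postorder_last: "\<exists>xs. postorder ch f v = xs @ [v]"
  by (cases f) auto

lemma map_append_eq_upt:
  assumes "map g (xs @ ys) = [a..<a + length xs + length ys]"
  shows "map g xs = [a..<a + length xs]" "map g ys = [a + length xs..<a + length xs + length ys]"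
  using assms upt_add_eq_append[of a "a + length xs" "length ys"] by (simp_all add: add.assoc)

lemma pnodes_ptree_of:
  "height_le ch f v \<Longrightarrow> map g (postorder ch f v) = [Suc off..<Suc off + length (postorder ch f v)]
   \<Longrightarrow> pnodes off (ptree_of ch f v) = map (\<lambda>x. (g x, map g (ch x))) (postorder ch f v)"
proof (induction f arbitrary: v off)
  case (Suc f)
  have children: "pnodes_l off (map (ptree_of ch f) cs)
      = map (\<lambda>x. (g x, map g (ch x))) (concat (map (postorder ch f) cs))
    \<and> clabels off (map (ptree_of ch f) cs) = map g cs"
    if "\<forall>c\<in>set cs. height_le ch f c"
      "map g (concat (map (postorder ch f) cs))
         = [Suc off..<Suc off + length (concat (map (postorder ch f) cs))]" for cs off
    using that
  proof (induction cs arbitrary: off)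
    case (Cons c cs)
    let ?P = "postorder ch f c" and ?R = "concat (map (postorder ch f) cs)"
    have "map g (?P @ ?R) = [Suc off..<Suc off + length ?P + length ?R]"
      using Cons.prems(2) by (simp add: add.assoc)
    note P = map_append_eq_upt(1)[OF this] and R = map_append_eq_upt(2)[OF this]
    obtain xs where "?P = xs @ [c]" using postorder_last by blast
    then have "g c = off + length ?P" using arg_cong[OF P, of last] by simp
    then show ?case
      using Suc.IH[of c off] Cons.IH[of "off + length ?P"] Cons.prems(1) P R
      by (simp add: tsize_ptree_of)
  qed simp
  let ?C = "concat (map (postorder ch f) (ch v))"
  have "map g (?C @ [v]) = [Suc off..<Suc off + length ?C + length [v]]"
    using Suc.prems(2) by simp
  note map_append_eq_upt[OF this]
  then show ?case
    using children[of "ch v" off] Suc.prems(1) tsize_ptree_of[of ch "Suc f" v] by simp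
qed simp

lemma distinct_concat_map:
  "distinct xs \<Longrightarrow> (\<And>x. x \<in> set xs \<Longrightarrow> distinct (F x))
   \<Longrightarrow> (\<And>x y. x \<in> set xs \<Longrightarrow> y \<in> set xs \<Longrightarrow> x \<noteq> y \<Longrightarrow> set (F x) \<inter> set (F y) = {})
   \<Longrightarrow> distinct (concat (map F xs))"
  by (induction xs) (auto simp: distinct_append)

context
  fixes n :: nat and par :: "nat \<Rightarrow> nat" and ch :: "nat \<Rightarrow> nat list"
  assumes rt: "is_rtree n par" and ch: "\<And>v. set (ch v) = {u\<in>{1..n}. par u = v}"
begin

lemma height_le_if_depth_le:
  "(\<forall>u\<in>{1..n}. \<forall>k. (par ^^ k) u = v \<longrightarrow> k \<le> f) \<Longrightarrow> height_le ch f v"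
proof (induction f arbitrary: v)
  case 0
  have "c \<notin> set (ch v)" for c
    using 0[rule_format, of c 1] ch by auto
  then show ?case by (cases "ch v") auto
next
  case (Suc f)
  have "height_le ch f c" if "c \<in> set (ch v)" for c
  proof (rule Suc.IH, intro ballI allI impI)
    fix u k assume "u \<in> {1..n}" "(par ^^ k) u = c"
    then show "k \<le> f" using Suc.prems that ch[of v] by (fastforce dest: spec[of _ "Suc k"])
  qed
  then show ?case by simp
qed

lemma set_postorder_subset: "v \<in> {1..n} \<Longrightarrow> set (postorder ch f v) \<subseteq> subtree n par v"
proof (induction f arbitrary: v)
  case 0
  then show ?case by (auto simp: subtree_def intro: exI[of _ 0])
next
  case (Suc f)
  have "u \<in> subtree n par v" if c: "c \<in> set (ch v)" and u: "u \<in> set (postorder ch f c)" for c u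
  proof -
    have "c \<in> {1..n}" "par c = v" using c ch by auto
    then obtain k where "u \<in> {1..n}" "(par ^^ k) u = c"
      using Suc.IH[of c] u unfolding subtree_def by blast
    then have "u \<in> {1..n}" "(par ^^ Suc k) u = v" using \<open>par c = v\<close> by simp_all
    then show ?thesis unfolding subtree_def by blast
  qed
  then show ?case using Suc.prems by (auto simp: subtree_def intro: exI[of _ 0])
qed

lemma funpow_Suc_in_children:
  assumes "v \<in> {1..n}" "(par ^^ Suc k) u = v"
  shows "(par ^^ k) u \<in> set (ch v)"
proof -
  have "par ((par ^^ k) u) = v" using assms(2) by simp
  moreover from this have "(par ^^ k) u \<in> {1..n}"
    using assms(1) rtree_par_outside[OF rt] by fastforce
  ultimately show ?thesis using ch by simp
qed

lemma subtree_subset_postorder: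
  "height_le ch f v \<Longrightarrow> v \<in> {1..n} \<Longrightarrow> subtree n par v \<subseteq> set (postorder ch f v)"
proof (induction f arbitrary: v)
  case 0
  have "(par ^^ k) u = v \<Longrightarrow> u = v" for u k
    using funpow_Suc_in_children[OF "0.prems"(2), of "k - 1" u] "0.prems"(1) by (cases k) auto
  then show ?case unfolding subtree_def by auto
next
  case (Suc f)
  show ?case
  proof
    fix u assume "u \<in> subtree n par v"
    then obtain k where u: "u \<in> {1..n}" "(par ^^ k) u = v" unfolding subtree_def by blast
    show "u \<in> set (postorder ch (Suc f) v)"
    proof (cases k)
      case (Suc k')
      then have c: "(par ^^ k') u \<in> set (ch v)" using funpow_Suc_in_children Suc.prems(2) u by blast
      then have "u \<in> subtree n par ((par ^^ k') u)" "(par ^^ k') u \<in> {1..n}"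
        using u(1) ch unfolding subtree_def by auto
      then have "u \<in> set (postorder ch f ((par ^^ k') u))" using Suc.IH Suc.prems(1) c by auto
      then show ?thesis using c by auto
    qed (use u in simp)
  qed
qed

lemma distinct_postorder:
  "(\<And>w. distinct (ch w)) \<Longrightarrow> v \<in> {1..n} \<Longrightarrow> distinct (postorder ch f v)"
proof (induction f arbitrary: v)
  case (Suc f)
  have c: "c \<in> {1..n}" "par c = v" if "c \<in> set (ch v)" for c using that ch by auto
  have "set (postorder ch f c) \<inter> set (postorder ch f c') = {}"
    if cc: "c \<in> set (ch v)" "c' \<in> set (ch v)" "c \<noteq> c'" for c c'
  proof (rule ccontr)
    assume "set (postorder ch f c) \<inter> set (postorder ch f c') \<noteq> {}"
    then obtain u where "u \<in> subtree n par c" "u \<in> subtree n par c'"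
      using set_postorder_subset c cc by blast
    then obtain k k' where "(par ^^ k) u = c" "(par ^^ k') u = c'" unfolding subtree_def by blast
    then show False
      using rtree_path_sibling_unique[OF rt c(2)[OF cc(1)] c(2)[OF cc(2)]] Suc.prems(2) cc(3)
      by auto
  qed
  then have "distinct (concat (map (postorder ch f) (ch v)))"
    using Suc c by (intro distinct_concat_map) auto
  moreover have "v \<notin> set (postorder ch f c)" if cv: "c \<in> set (ch v)" for c
  proof
    assume "v \<in> set (postorder ch f c)"
    then obtain k where "(par ^^ k) v = c" using set_postorder_subset c cv unfolding subtree_def by blast
    then have "(par ^^ Suc k) v = v" using c(2)[OF cv] by simp
    then show False using rtree_no_cycle[OF rt, of v "Suc k"] Suc.prems(2) by simp
  qed
  ultimately show ?case by auto
qed simp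

end

lemma permutes_of_enumeration:
  assumes L: "distinct L" "set L = {1..n}"
  obtains \<sigma> where "\<sigma> permutes {1..n}" "\<And>i. i < n \<Longrightarrow> \<sigma> (Suc i) = L ! i"
proof
  have len: "length L = n" using distinct_card[OF L(1)] L(2) by simp
  define \<sigma> where "\<sigma> i = (if i \<in> {1..n} then L ! (i - 1) else i)" for i
  have "inj_on \<sigma> {1..n}"
    using L(1) len by (auto simp: inj_on_def \<sigma>_def nth_eq_iff_index_eq)
  moreover have "\<sigma> ` {1..n} \<subseteq> {1..n}"
  proof
    fix y assume "y \<in> \<sigma> ` {1..n}"
    then obtain i where "i \<in> {1..n}" "y = L ! (i - 1)" by (auto simp: \<sigma>_def)
    then show "y \<in> {1..n}" using L(2) len nth_mem[of "i - 1" L] by auto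
  qed
  ultimately have "bij_betw \<sigma> {1..n} {1..n}"
    by (simp add: bij_betw_def endo_inj_surj)
  then show "\<sigma> permutes {1..n}" by (rule bij_imp_permutes) (auto simp: \<sigma>_def)
  show "\<sigma> (Suc i) = L ! i" if "i < n" for i using that by (simp add: \<sigma>_def)
qed

lemma relabel_opar_eq:
  assumes rt: "is_rtree n par" and \<sigma>: "\<sigma> permutes {1..n}" and "tsize t = n"
    and ch: "\<And>v. set (ch v) = {u\<in>{1..n}. par u = v}"
    and nodes: "nodes t = (\<lambda>x. (inv \<sigma> x, map (inv \<sigma>) (ch x))) ` {1..n}"
  shows "relabel \<sigma> (opar t) = par"
proof
  fix v
  have \<sigma>v: "\<sigma> (inv \<sigma> v) = v" using permutes_inverses(1)[OF \<sigma>] .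
  have opar: "opar t (inv \<sigma> v) = inv \<sigma> (par v)" if "par v \<noteq> 0"
  proof -
    have "par v \<in> {1..n}" using that rtree_par_le[OF rt, of v] by auto
    then have "(inv \<sigma> (par v), map (inv \<sigma>) (ch (par v))) \<in> nodes t" using nodes by blast
    moreover have "v \<in> set (ch (par v))"
      using ch that rtree_par_outside[OF rt, of v] by fastforce
    ultimately show ?thesis using opar_eq by auto
  qed
  have "opar t (inv \<sigma> v) = 0" if "par v = 0"
  proof (rule ccontr)
    assume "opar t (inv \<sigma> v) \<noteq> 0"
    then obtain cl where cl: "(opar t (inv \<sigma> v), cl) \<in> nodes t" "inv \<sigma> v \<in> set cl"
      using opar_cases[of t "inv \<sigma> v"] by auto
    then obtain x where "x \<in> {1..n}" "cl = map (inv \<sigma>) (ch x)" using nodes by auto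
    then have "par v = x" using cl(2) ch permutes_inv[OF \<sigma>]
      by (auto dest: permutes_inj[THEN injD])
    then show False using that \<open>x \<in> {1..n}\<close> by simp
  qed
  then show "relabel \<sigma> (opar t) v = par v"
    using opar perm_fixes_0[OF \<sigma>] permutes_inverses(1)[OF \<sigma>]
    by (cases "par v = 0") (simp_all add: relabel_def)
qed

lemma plane_tree_of_rtree:
  assumes rt: "is_rtree n par"
    and ch: "\<And>v. distinct (ch v)" "\<And>v. set (ch v) = {u\<in>{1..n}. par u = v}"
  obtains t \<sigma> where "tsize t = n" "\<sigma> permutes {1..n}" "relabel \<sigma> (opar t) = par"
    "\<forall>(w, cl)\<in>nodes t. ch (\<sigma> w) = map \<sigma> cl"
proof -
  obtain r where r: "r \<in> {1..n}" "par r = 0" "\<And>x. x \<in> {1..n} \<Longrightarrow> par x = 0 \<Longrightarrow> x = r"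
    using rtree_root[OF rt] by blast
  obtain f where "\<forall>u\<in>{1..n}. \<forall>k. (par ^^ k) u \<noteq> 0 \<longrightarrow> k \<le> f"
    using rtree_depth_bound[OF rt] by blast
  then have height: "height_le ch f r" using r(1) by (intro height_le_if_depth_le[OF rt ch(2)]) auto
  define L where "L = postorder ch f r"
  have "subtree n par r = {1..n}"
    using rtree_reaches_root[OF rt r(1,2)] unfolding subtree_def by auto
  then have setL: "set L = {1..n}"
    using set_postorder_subset[OF rt ch(2) r(1)] subtree_subset_postorder[OF rt ch(2) height r(1)]
    unfolding L_def by blast
  have dL: "distinct L" unfolding L_def by (rule distinct_postorder[OF rt ch(2) ch(1) r(1)])
  obtain \<sigma> where \<sigma>: "\<sigma> permutes {1..n}" "\<And>i. i < n \<Longrightarrow> \<sigma> (Suc i) = L ! i"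
    using permutes_of_enumeration[OF dL setL] by blast
  have lenL: "length L = n" using distinct_card[OF dL] setL by simp
  have "map (inv \<sigma>) L = [Suc 0..<Suc 0 + length L]"
  proof (rule nth_equalityI)
    fix i assume "i < length (map (inv \<sigma>) L)"
    then show "map (inv \<sigma>) L ! i = [Suc 0..<Suc 0 + length L] ! i"
      using \<sigma>(2)[of i] lenL permutes_inv_eq[OF \<sigma>(1)] by (simp del: upt_Suc)
  qed (simp del: upt_Suc)
  then have pn: "pnodes 0 (ptree_of ch f r) = map (\<lambda>x. (inv \<sigma> x, map (inv \<sigma>) (ch x))) L"
    unfolding L_def by (intro pnodes_ptree_of height)
  define t where "t = ptree_of ch f r"
  have tsize: "tsize t = n" unfolding t_def tsize_ptree_of L_def[symmetric] lenL ..
  have nodes: "nodes t = (\<lambda>x. (inv \<sigma> x, map (inv \<sigma>) (ch x))) ` {1..n}"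
    unfolding t_def pn using setL by simp
  show ?thesis
  proof
    show "relabel \<sigma> (opar t) = par" by (rule relabel_opar_eq[OF rt \<sigma>(1) tsize ch(2) nodes])
    show "\<forall>(w, cl)\<in>nodes t. ch (\<sigma> w) = map \<sigma> cl"
      using nodes permutes_inverses(1)[OF \<sigma>(1)] by (auto simp: map_idI)
  qed (use tsize \<sigma> in auto)
qed

abbreviation park_spot :: "(nat \<Rightarrow> nat) \<Rightarrow> nat list \<Rightarrow> nat \<Rightarrow> nat" where
  "park_spot par p i \<equiv> spot par (occ_before par p i) (p ! i)"

lemma occ_before_Suc:
  "i < length p \<Longrightarrow> occ_before par p (Suc i) =
     (if park_spot par p i = 0 then occ_before par p i
      else insert (park_spot par p i) (occ_before par p i))"
  unfolding occ_before_def occ_after_def by (simp add: take_Suc_conv_app_nth Let_def)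

lemma occ_before_mono: "i \<le> j \<Longrightarrow> j \<le> length p \<Longrightarrow> occ_before par p i \<subseteq> occ_before par p j"
proof (induction j)
  case (Suc j)
  then show ?case
    using occ_before_Suc[of j p par] by (cases "i = Suc j") (auto split: if_splits)
qed simp

lemma park_spot_in_occ_before:
  assumes "i < j" "j \<le> length p" "park_spot par p i \<noteq> 0"
  shows "park_spot par p i \<in> occ_before par p j"
proof -
  have "park_spot par p i \<in> occ_before par p (Suc i)" using occ_before_Suc[of i p par] assms by simp
  also have "\<dots> \<subseteq> occ_before par p j" using occ_before_mono assms by simp
  finally show ?thesis .
qed

context
  fixes n :: nat and par :: "nat \<Rightarrow> nat"
  assumes rt: "is_rtree n par"
begin

lemma spot_Least:
  assumes "occ \<subseteq> {1..n}"
  shows "spot par occ a = (par ^^ (LEAST k. (par ^^ k) a \<notin> occ)) a"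
    and "(par ^^ (LEAST k. (par ^^ k) a \<notin> occ)) a \<notin> occ"
    and "j < (LEAST k. (par ^^ k) a \<notin> occ) \<Longrightarrow> (par ^^ j) a \<in> occ"
proof -
  obtain K where "(par ^^ K) a = 0" using rtree_reaches_0[OF rt] by blast
  then have "\<exists>k. (par ^^ k) a \<notin> occ" using assms by (intro exI[of _ K]) auto
  then show "(par ^^ (LEAST k. (par ^^ k) a \<notin> occ)) a \<notin> occ" by (rule LeastI_ex)
qed (use not_less_Least in \<open>auto simp: spot_def\<close>)

lemma occ_before_subset: "set p \<subseteq> {1..n} \<Longrightarrow> occ_before par p i \<subseteq> {1..n}"
proof -
  have "fold (\<lambda>a occ. let x = spot par occ a in if x = 0 then occ else insert x occ) ps Oc \<subseteq> {1..n}"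
    if "Oc \<subseteq> {1..n}" "set ps \<subseteq> {1..n}" for ps Oc
    using that
  proof (induction ps arbitrary: Oc)
    case (Cons a ps)
    have "spot par Oc a \<le> n"
      unfolding spot_def by (rule rtree_funpow_le[OF rt]) (use Cons.prems in auto)
    then show ?case using Cons by (auto simp: Let_def)
  qed simp
  moreover assume "set p \<subseteq> {1..n}"
  then have "set (take i p) \<subseteq> {1..n}" by (meson order_trans set_take_subset)
  ultimately show ?thesis unfolding occ_before_def occ_after_def by simp
qed

lemma crosses_sibling_unique:
  assumes "crosses par p i (u, w)" "crosses par p i (v, w)"
  shows "u = v"
proof -
  from assms(1) obtain k where "w = par u" "w \<noteq> 0" "(par ^^ k) (p ! i) = u"
    unfolding crosses_def by auto
  moreover from assms(2) obtain m where "w = par v" "(par ^^ m) (p ! i) = v"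
    unfolding crosses_def by auto
  ultimately show ?thesis using rtree_path_sibling_unique[OF rt] by metis
qed

end

section \<open>The order in which sibling edges are first crossed\<close>

definition left_of :: "nat \<Rightarrow> (nat \<Rightarrow> nat) \<Rightarrow> nat list \<Rightarrow> nat \<Rightarrow> nat \<Rightarrow> bool" where
  "left_of n par p u v \<longleftrightarrow> crossed_before n par p (v, par v) (u, par u)"

lemma crossed_before_asym: "crossed_before n par p e f \<Longrightarrow> \<not> crossed_before n par p f e"
  unfolding crossed_before_def by (meson nat_le_linear)

lemma left_of_asym: "left_of n par p u v \<Longrightarrow> \<not> left_of n par p v u"
  unfolding left_of_def using crossed_before_asym by blast

lemma left_of_relabel:
  "s permutes {1..n} \<Longrightarrow> length p = n
   \<Longrightarrow> left_of n (relabel s par) (map s p) (s u) (s v) = left_of n par p u v"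
  unfolding left_of_def by (simp add: crossed_before_relabel relabel_apply permutes_inj)

definition first_crossing :: "(nat \<Rightarrow> nat) \<Rightarrow> nat list \<Rightarrow> nat \<Rightarrow> nat" where
  "first_crossing par p u = (LEAST i. crosses par p i (u, par u))"

text \<open>Children ordered by decreasing first crossing; all crossings happen before driver n,
  so subtracting from n reverses the order.\<close>

definition children_by_crossing :: "nat \<Rightarrow> (nat \<Rightarrow> nat) \<Rightarrow> nat list \<Rightarrow> nat \<Rightarrow> nat list" where
  "children_by_crossing n par p v =
     sort_key (\<lambda>u. n - first_crossing par p u) (sorted_list_of_set {u\<in>{1..n}. par u = v})"

lemma children_by_crossing_set: "set (children_by_crossing n par p v) = {u\<in>{1..n}. par u = v}"
  unfolding children_by_crossing_def by simp

lemma children_by_crossing_distinct: "distinct (children_by_crossing n par p v)"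
  unfolding children_by_crossing_def by simp

context
  fixes n :: nat and par :: "nat \<Rightarrow> nat" and p :: "nat list"
  assumes rt: "is_rtree n par" and pref: "is_pref n p" and pr: "prime_pf n par p"
begin

lemma park_spot_neq_0: "i < n \<Longrightarrow> park_spot par p i \<noteq> 0"
  using pr unfolding prime_pf_def parking_function_def by blast

lemma occ_before_vertices: "occ_before par p i \<subseteq> {1..n}"
  using occ_before_subset[OF rt] pref unfolding is_pref_def by blast

lemma park_spot_notin_occ_before: "park_spot par p i \<notin> occ_before par p i"
  using spot_Least(1,2)[OF rt occ_before_vertices] by simp

lemma inj_on_park_spot: "inj_on (park_spot par p) {..<n}"
proof -
  have "park_spot par p i \<noteq> park_spot par p j" if "i < j" "j < n" for i j
    using park_spot_in_occ_before[of i j p par] park_spot_neq_0[of i] that pref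
      park_spot_notin_occ_before[of j] unfolding is_pref_def by auto
  then show ?thesis unfolding inj_on_def by (metis lessThan_iff nat_neq_iff)
qed

lemma exists_driver_leaving_subtree:
  assumes "u \<in> {1..n}" "par u \<noteq> 0"
  shows "\<exists>i<n. p ! i \<in> subtree n par u \<and> park_spot par p i \<notin> subtree n par u"
proof (rule ccontr)
  \<comment> \<open>pigeonhole: distinct drivers park at distinct vertices\<close>
  let ?S = "subtree n par u" and ?A = "{i. i < n \<and> p ! i \<in> subtree n par u}"
  assume "\<not> ?thesis"
  then have "park_spot par p ` ?A \<subseteq> ?S" by blast
  moreover have "inj_on (park_spot par p) ?A" by (rule inj_on_subset[OF inj_on_park_spot]) auto
  moreover have "finite ?S" unfolding subtree_def by simp
  ultimately have "card ?A \<le> card ?S" by (intro card_inj_on_le)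
  then show False using pr assms unfolding prime_pf_def by fastforce
qed

lemma crosses_if_leaving_subtree:
  assumes u: "u \<in> {1..n}" "par u \<noteq> 0"
    and i: "p ! i \<in> subtree n par u" "park_spot par p i \<notin> subtree n par u"
  shows "crosses par p i (u, par u)"
proof -
  let ?a = "p ! i" and ?occ = "occ_before par p i"
  let ?m = "LEAST k. (par ^^ k) ?a \<notin> ?occ"
  note occ = occ_before_vertices[of i]
  obtain k0 where k0: "(par ^^ k0) ?a = u" using i(1) unfolding subtree_def by blast
  have "k0 < ?m"
  proof (rule ccontr)
    assume "\<not> k0 < ?m"
    then have "(par ^^ k0) ?a = (par ^^ (k0 - ?m)) ((par ^^ ?m) ?a)"
      by (metis funpow_add le_add_diff_inverse2 not_less o_apply)
    then have "(par ^^ (k0 - ?m)) (park_spot par p i) = u"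
      using k0 spot_Least(1)[OF rt occ] by simp
    moreover have "park_spot par p i \<le> n"
      using i(1) rtree_funpow_le[OF rt] unfolding spot_Least(1)[OF rt occ] subtree_def by simp
    ultimately have "park_spot par p i \<in> subtree n par u"
      using u rtree_funpow_0[OF rt] unfolding subtree_def by (cases "park_spot par p i") auto
    then show False using i(2) by simp
  qed
  then have "\<forall>j\<le>k0. (par ^^ j) ?a \<in> ?occ" using spot_Least(3)[OF rt occ] by simp
  then show ?thesis unfolding crosses_def using k0 u(2) by auto
qed

lemma first_crossing_spec:
  assumes "u \<in> {1..n}" "par u \<noteq> 0"
  shows "first_crossing par p u < n" "crosses par p (first_crossing par p u) (u, par u)"
    "j < first_crossing par p u \<Longrightarrow> \<not> crosses par p j (u, par u)"
proof -
  obtain i where i: "i < n" "crosses par p i (u, par u)"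
    using exists_driver_leaving_subtree[OF assms] crosses_if_leaving_subtree[OF assms] by blast
  show "crosses par p (first_crossing par p u) (u, par u)"
    unfolding first_crossing_def by (rule LeastI[of _ i]) (rule i(2))
  have "first_crossing par p u \<le> i" unfolding first_crossing_def by (rule Least_le) (rule i(2))
  then show "first_crossing par p u < n" using i(1) by simp
  show "j < first_crossing par p u \<Longrightarrow> \<not> crosses par p j (u, par u)"
    unfolding first_crossing_def by (rule not_less_Least)
qed

lemma left_of_if_first_crossing_less:
  assumes "u \<in> {1..n}" "v \<in> {1..n}" "par u \<noteq> 0" "par v \<noteq> 0"
    and "first_crossing par p v < first_crossing par p u"
  shows "left_of n par p u v"
  unfolding left_of_def crossed_before_def
proof (intro exI[of _ "first_crossing par p v"] conjI allI impI)
  show "first_crossing par p v < n" "crosses par p (first_crossing par p v) (v, par v)"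
    using first_crossing_spec(1,2)[OF assms(2,4)] by auto
  show "\<not> crosses par p j (u, par u)" if "j \<le> first_crossing par p v" for j
    using first_crossing_spec(3)[OF assms(1,3)] that assms(5) by simp
qed

lemma children_by_crossing_sorted:
  assumes "v \<noteq> 0"
  shows "sorted_wrt (left_of n par p) (children_by_crossing n par p v)"
  unfolding sorted_wrt_iff_nth_less
proof (intro allI impI)
  fix i j
  let ?xs = "children_by_crossing n par p v"
  assume ij: "i < j" "j < length ?xs"
  have "sorted (map (\<lambda>u. n - first_crossing par p u) ?xs)"
    unfolding children_by_crossing_def by (rule sorted_sort_key)
  then have le: "n - first_crossing par p (?xs ! i) \<le> n - first_crossing par p (?xs ! j)"
    using sorted_nth_mono[of _ i j] ij by fastforce
  have mem: "?xs ! k \<in> {1..n}" "par (?xs ! k) = v" if "k < length ?xs" for k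
    using that nth_mem[of k ?xs] children_by_crossing_set by auto
  have "first_crossing par p (?xs ! i) \<noteq> first_crossing par p (?xs ! j)"
  proof
    assume "first_crossing par p (?xs ! i) = first_crossing par p (?xs ! j)"
    then have "crosses par p (first_crossing par p (?xs ! j)) (?xs ! i, v)"
      "crosses par p (first_crossing par p (?xs ! j)) (?xs ! j, v)"
      using first_crossing_spec(2) mem[of i] mem[of j] ij assms by fastforce+
    then have "?xs ! i = ?xs ! j" by (rule crosses_sibling_unique[OF rt])
    then show False using ij children_by_crossing_distinct by (simp add: nth_eq_iff_index_eq)
  qed
  moreover have "first_crossing par p (?xs ! i) < n" "first_crossing par p (?xs ! j) < n"
    using first_crossing_spec(1) mem[of i] mem[of j] ij assms by auto
  ultimately have "first_crossing par p (?xs ! j) < first_crossing par p (?xs ! i)"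
    using le by linarith
  then show "left_of n par p (?xs ! i) (?xs ! j)"
    using left_of_if_first_crossing_less mem[of i] mem[of j] ij assms by auto
qed

end

section \<open>Relabelling standardized restricted prime parking functions\<close>

lemma is_rtree_relabel:
  assumes rt: "is_rtree n par" and s: "s permutes {1..n}"
  shows "is_rtree n (relabel s par)"
  unfolding is_rtree_def
proof (intro conjI ballI allI impI)
  have inv: "inv s permutes {1..n}" using permutes_inv[OF s] .
  have apply_inv: "relabel s par v = s (par (inv s v))" for v by (simp add: relabel_def)
  show "relabel s par v = 0" if "v \<notin> {1..n}" for v
    using that permutes_not_in[OF inv] rtree_par_outside[OF rt] perm_fixes_0[OF s]
    by (simp add: apply_inv)
  show "relabel s par v \<le> n" for v
    using rtree_par_le[OF rt, of "inv s v"] permutes_in_image[OF s, of "par (inv s v)"]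
      perm_fixes_0[OF s] by (cases "par (inv s v) = 0") (auto simp: apply_inv)
  have "{v \<in> {1..n}. relabel s par v = 0} = s ` {v \<in> {1..n}. par v = 0}"
    using permutes_in_image[OF inv] permutes_in_image[OF s] permutes_inverses[OF s]
    by (auto simp: apply_inv perm_eq_0_iff[OF s] image_iff) (metis permutes_inverses(2)[OF s])
  moreover have "inj_on s {v \<in> {1..n}. par v = 0}"
    using permutes_inj[OF s] inj_on_subset subset_UNIV by blast
  ultimately show "card {v \<in> {1..n}. relabel s par v = 0} = 1"
    using rt unfolding is_rtree_def by (simp add: card_image)
  show "\<exists>k. (relabel s par ^^ k) v = 0" for v
  proof -
    obtain k where "(par ^^ k) (inv s v) = 0" using rtree_reaches_0[OF rt] by blast
    then have "(relabel s par ^^ k) (s (inv s v)) = 0"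
      using relabel_funpow_apply[OF permutes_bij[OF s]] perm_fixes_0[OF s] by simp
    then show ?thesis using permutes_inverses(1)[OF s] by auto
  qed
qed

lemma is_pref_relabel: "is_pref n p \<Longrightarrow> s permutes {1..n} \<Longrightarrow> is_pref n (map s p)"
  unfolding is_pref_def using permutes_in_image by fastforce

lemma sorted_wrt_asym_unique:
  assumes asym: "\<And>x y. R x y \<Longrightarrow> \<not> R y x"
  shows "sorted_wrt R xs \<Longrightarrow> sorted_wrt R ys \<Longrightarrow> distinct xs \<Longrightarrow> distinct ys
         \<Longrightarrow> set xs = set ys \<Longrightarrow> xs = ys"
proof (induction xs arbitrary: ys)
  case (Cons x xs)
  then obtain y ys' where ys: "ys = y # ys'" by (cases ys) auto
  have "x = y"
  proof (rule ccontr)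
    assume "x \<noteq> y"
    then have "y \<in> set xs" "x \<in> set ys'" using Cons.prems(5) ys by auto
    then show False using Cons.prems(1,2) ys asym by auto
  qed
  moreover have "set xs = set ys'"
    using Cons.prems(3-5) ys \<open>x = y\<close> by (metis Diff_insert_absorb distinct.simps(2) list.simps(15))
  ultimately show ?case using Cons ys by simp
qed simp

lemma sibling_cond_iff_sorted:
  "sibling_cond n t p \<longleftrightarrow> (\<forall>(w, cl)\<in>nodes t. sorted_wrt (left_of n (opar t) p) cl)"
proof -
  have left_of_siblings: "left_of n (opar t) p (cl ! i) (cl ! j)
      \<longleftrightarrow> crossed_before n (opar t) p (cl ! j, w) (cl ! i, w)"
    if "(w, cl) \<in> nodes t" "i < length cl" "j < length cl" for w cl i j
    using that opar_eq by (simp add: left_of_def)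
  show ?thesis
    unfolding sibling_cond_def sorted_wrt_iff_nth_less
  proof
    assume sc: "\<forall>w cl. (w, cl) \<in> nodes t \<longrightarrow> (\<forall>i j. i < length cl \<longrightarrow> j < length cl \<longrightarrow> i \<noteq> j
              \<longrightarrow> (i < j) = crossed_before n (opar t) p (cl ! j, w) (cl ! i, w))"
    show "\<forall>(w, cl)\<in>nodes t. \<forall>i j. i < j \<longrightarrow> j < length cl
              \<longrightarrow> left_of n (opar t) p (cl ! i) (cl ! j)"
    proof clarify
      fix w cl i j assume "(w, cl) \<in> nodes t" "i < j" "j < length cl"
      then show "left_of n (opar t) p (cl ! i) (cl ! j)"
        using sc[rule_format, of w cl i j] left_of_siblings[of w cl i j] by simp
    qed
  next
    assume sorted: "\<forall>(w, cl)\<in>nodes t. \<forall>i j. i < j \<longrightarrow> j < length cl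
              \<longrightarrow> left_of n (opar t) p (cl ! i) (cl ! j)"
    show "\<forall>w cl. (w, cl) \<in> nodes t \<longrightarrow> (\<forall>i j. i < length cl \<longrightarrow> j < length cl \<longrightarrow> i \<noteq> j
              \<longrightarrow> (i < j) = crossed_before n (opar t) p (cl ! j, w) (cl ! i, w))"
    proof (intro allI impI)
      fix w cl i j
      assume wcl: "(w, cl) \<in> nodes t" and ij: "i < length cl" "j < length cl" "i \<noteq> j"
      show "(i < j) = crossed_before n (opar t) p (cl ! j, w) (cl ! i, w)"
      proof (cases "i < j")
        case False
        then have "left_of n (opar t) p (cl ! j) (cl ! i)" using sorted wcl ij by auto
        then show ?thesis using left_of_asym left_of_siblings[OF wcl ij(1,2)] False by blast
      qed (use sorted wcl ij left_of_siblings in auto)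
    qed
  qed
qed

lemma relabel_SRP:
  assumes "(t, p) \<in> SRP n" "s permutes {1..n}"
  shows "is_rtree n (relabel s (opar t)) \<and> is_pref n (map s p)
    \<and> prime_pf n (relabel s (opar t)) (map s p)"
proof -
  have t: "tsize t = n" "is_pref n p" "prime_pf n (opar t) p" using assms(1) unfolding SRP_def by auto
  then have "length p = n" unfolding is_pref_def by simp
  then show ?thesis
    using is_rtree_relabel[OF is_rtree_opar[of t, unfolded t(1)] assms(2)]
      is_pref_relabel[OF t(2) assms(2)] prime_pf_relabel[OF assms(2) _ t(3)] by blast
qed

lemma relabel_SRP_surj:
  assumes rt: "is_rtree n par" and pref: "is_pref n p" and pr: "prime_pf n par p"
  obtains t p0 s
  where "(t, p0) \<in> SRP n" "s permutes {1..n}" "relabel s (opar t) = par" "map s p0 = p"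
proof -
  let ?ch = "children_by_crossing n par p"
  obtain t s where t: "tsize t = n" and s: "s permutes {1..n}" and par: "relabel s (opar t) = par"
    and ch: "\<forall>(w, cl)\<in>nodes t. ?ch (s w) = map s cl"
    using plane_tree_of_rtree[OF rt children_by_crossing_distinct[of n par p]
        children_by_crossing_set[of n par p]] by blast
  define p0 where "p0 = map (inv s) p"
  have p: "map s p0 = p"
    unfolding p0_def using permutes_inverses(1)[OF s] by (simp add: map_idI)
  have len: "length p = n" "length p0 = n" using pref unfolding is_pref_def p0_def by simp_all
  have "opar t = relabel (inv s) par"
    using relabel_inv_relabel[OF permutes_bij[OF s], of "opar t"] par by simp
  then have prime: "prime_pf n (opar t) p0"
    unfolding p0_def by (rule ssubst) (rule prime_pf_relabel[OF permutes_inv[OF s] len(1) pr])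
  have "sorted_wrt (left_of n (opar t) p0) cl" if "(w, cl) \<in> nodes t" for w cl
  proof -
    have "s w \<noteq> 0" using node_in_range[OF that] perm_eq_0_iff[OF s] by auto
    moreover have "?ch (s w) = map s cl" using ch that by blast
    ultimately have "sorted_wrt (left_of n par p) (map s cl)"
      using children_by_crossing_sorted[OF rt pref pr] by metis
    then show ?thesis
      unfolding sorted_wrt_map par[symmetric] p[symmetric] left_of_relabel[OF s len(2)] .
  qed
  then have "sibling_cond n t p0" unfolding sibling_cond_iff_sorted by blast
  then have "(t, p0) \<in> SRP n"
    unfolding SRP_def using t prime is_pref_relabel[OF pref permutes_inv[OF s]] p0_def by simp
  then show ?thesis using that s par p by blast
qed

lemma relabel_preimage:
  assumes "bij s"
  shows "{u. relabel s f u = s w} = s ` {u. f u = w}"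
proof -
  have "relabel s f u = s w \<longleftrightarrow> f (inv s u) = w" for u
    using assms by (simp add: relabel_def bij_is_inj inj_eq)
  moreover have "u = s (inv s u)" for u using assms by (simp add: bij_is_surj surj_f_inv_f)
  ultimately show ?thesis using assms by (auto simp: bij_is_inj inv_f_f)
qed

lemma nodes_map_if_relabel:
  assumes "(t, p) \<in> SRP n" "(t', p') \<in> SRP n" and \<tau>: "\<tau> permutes {1..n}"
    and par: "relabel \<tau> (opar t) = opar t'" and p: "map \<tau> p = p'"
  shows "\<forall>(w, cl)\<in>nodes t. (\<tau> w, map \<tau> cl) \<in> nodes t'"
proof (intro ballI, clarify)
  fix w cl assume wcl: "(w, cl) \<in> nodes t"
  have t: "tsize t = n" "length p = n" "sibling_cond n t p"
    and t': "tsize t' = n" "sibling_cond n t' p'"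
    using assms(1,2) unfolding SRP_def is_pref_def by auto
  have "\<tau> w \<in> {1..tsize t'}" using node_in_range[OF wcl] t(1) t'(1) permutes_in_image[OF \<tau>] by simp
  then obtain cl' where cl': "(\<tau> w, cl') \<in> nodes t'" using node_exists by blast
  have "map \<tau> cl = cl'"
  proof (rule sorted_wrt_asym_unique[OF left_of_asym])
    show "sorted_wrt (left_of n (opar t') p') (map \<tau> cl)"
      using t(3) wcl unfolding sibling_cond_iff_sorted sorted_wrt_map par[symmetric] p[symmetric]
        left_of_relabel[OF \<tau> t(2)] by blast
    show "sorted_wrt (left_of n (opar t') p') cl'" using t'(2) cl' unfolding sibling_cond_iff_sorted by blast
    show "distinct (map \<tau> cl)"
      using node_children_distinct[OF wcl] permutes_inj[OF \<tau>] by (simp add: distinct_map inj_on_subset[of _ UNIV])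
    show "distinct cl'" by (rule node_children_distinct[OF cl'])
    show "set (map \<tau> cl) = set cl'"
      using opar_children[OF cl'] opar_children[OF wcl]
        relabel_preimage[OF permutes_bij[OF \<tau>], of "opar t" w] unfolding par by simp
  qed
  then show "(\<tau> w, map \<tau> cl) \<in> nodes t'" using cl' by simp
qed

lemma relabel_SRP_inj:
  assumes tp: "(t, p) \<in> SRP n" and tp': "(t', p') \<in> SRP n"
    and s: "s permutes {1..n}" and s': "s' permutes {1..n}"
    and par: "relabel s (opar t) = relabel s' (opar t')" and p: "map s p = map s' p'"
  shows "t = t' \<and> p = p' \<and> s = s'"
proof -
  have N: "tsize t = n" "tsize t' = n" using tp tp' unfolding SRP_def by auto
  define \<tau> where "\<tau> = inv s' \<circ> s"
  have \<tau>: "\<tau> permutes {1..n}" unfolding \<tau>_def by (rule permutes_compose[OF s permutes_inv[OF s']])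
  have par': "relabel \<tau> (opar t) = opar t'"
    using relabel_relabel[OF permutes_bij[OF s] permutes_bij[OF permutes_inv[OF s']]]
      relabel_inv_relabel[OF permutes_bij[OF s']] par unfolding \<tau>_def by metis
  have p': "map \<tau> p = p'"
    unfolding \<tau>_def using arg_cong[OF p, of "map (inv s')"] permutes_inverses(2)[OF s']
    by (simp add: map_idI)
  have nodes: "\<forall>(w, cl)\<in>nodes t. (\<tau> w, map \<tau> cl) \<in> nodes t'"
    by (rule nodes_map_if_relabel[OF tp tp' \<tau> par' p'])
  have root: "\<tau> n = n" by (rule relabel_opar_root[OF \<tau> N par'])
  then have "t = t'" by (rule tree_eq_if_nodes_map[OF N _ nodes])
  then have "\<tau> = id" using nodes_automorphism_eq_id[of \<tau> t] \<tau> root nodes N by simp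
  moreover have "s x = s' (\<tau> x)" for x unfolding \<tau>_def using permutes_inverses(1)[OF s'] by simp
  ultimately have "s = s'" by auto
  then show ?thesis using \<open>t = t'\<close> \<open>\<tau> = id\<close> p' by simp
qed

definition relabelled_pf :: "(ptree \<times> nat list) \<times> (nat \<Rightarrow> nat) \<Rightarrow> (nat \<Rightarrow> nat) \<times> nat list" where
  "relabelled_pf = (\<lambda>((t, p), s). (relabel s (opar t), map s p))"

lemma relabelled_pf_bij:
  "bij_betw relabelled_pf (SRP n \<times> {s. s permutes {1..n}})
     {(par, p). is_rtree n par \<and> is_pref n p \<and> prime_pf n par p}"
  unfolding bij_betw_def
proof
  show "inj_on relabelled_pf (SRP n \<times> {s. s permutes {1..n}})"
    using relabel_SRP_inj by (fastforce intro!: inj_onI simp: relabelled_pf_def)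
  show "relabelled_pf ` (SRP n \<times> {s. s permutes {1..n}})
        = {(par, p). is_rtree n par \<and> is_pref n p \<and> prime_pf n par p}"
  proof
    show "relabelled_pf ` (SRP n \<times> {s. s permutes {1..n}})
          \<subseteq> {(par, p). is_rtree n par \<and> is_pref n p \<and> prime_pf n par p}"
      using relabel_SRP by (auto simp: relabelled_pf_def)
    show "{(par, p). is_rtree n par \<and> is_pref n p \<and> prime_pf n par p}
          \<subseteq> relabelled_pf ` (SRP n \<times> {s. s permutes {1..n}})"
    proof clarify
      fix par p assume "is_rtree n par" "is_pref n p" "prime_pf n par p"
      then obtain t p0 s where "(t, p0) \<in> SRP n" "s permutes {1..n}"
        "relabel s (opar t) = par" "map s p0 = p"
        by (rule relabel_SRP_surj)
      then show "(par, p) \<in> relabelled_pf ` (SRP n \<times> {s. s permutes {1..n}})"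
        by (intro image_eqI[of _ _ "((t, p0), s)"]) (auto simp: relabelled_pf_def)
    qed
  qed
qed

theorem proposition4p2:
  fixes n :: nat
  assumes "n \<ge> 1"
  shows "P n = fact n * card (SRP n)"
proof -
  have "P n = card (SRP n \<times> {s. s permutes {1..n}})"
    unfolding P_def using bij_betw_same_card[OF relabelled_pf_bij] by simp
  also have "\<dots> = card (SRP n) * fact n"
    by (simp add: card_cartesian_product card_permutations)
  finally show ?thesis by simp
qed

end
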